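(* Let $s,k$ be positive integers, $\vec s=(s,\dots,s)\in\mathbb{Z}_+^k$ and $n=ks$. Then there exist two $\vec s$-multipermutations $\pi,\pi'$ such that \[ \max\bigl(\mathrm{LCS}(\pi,\pi'),\ \mathrm{LCS}(\pi,\overleftarrow{\pi'})\bigr)\leq\sqrt n+s. \]
   Context: For $\vec s\in\mathbb{Z}_+^k$, an $\vec s$-multipermutation is a word over $\{1,\dots,k\}$ in which each letter $l$ appears exactly $s_l$ times. $\mathrm{LCS}(w,w')$ is the length of a longest common subsequence of words $w,w'$. For a word $w$, $\overleftarrow{w}$ denotes its reverse (the word written backward). *)

theory Defs
  imports Complex_Main "HOL-Library.Sublist"
begin

definition multiperm :: "nat \<Rightarrow> (nat \<Rightarrow> nat) \<Rightarrow> nat list \<Rightarrow> bool" where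
  "multiperm k sv w \<longleftrightarrow> set w \<subseteq> {1..k} \<and> (\<forall>l\<in>{1..k}. count_list w l = sv l)"

definition LCS :: "'a list \<Rightarrow> 'a list \<Rightarrow> nat" where
  "LCS w w' = Max {length u | u. subseq u w \<and> subseq u w'}"

end

theory Submission
  imports Defs "HOL-Library.Multiset" "HOL-Library.Product_Lexorder"
begin

text \<open>
  Take \<open>\<pi> = 1\<^sup>s 2\<^sup>s \<dots> k\<^sup>s\<close> and \<open>\<pi>' = \<sigma>\<^sup>s\<close>, where \<open>\<sigma>\<close> cuts \<open>1, \<dots>, k\<close> into consecutive
  blocks of length \<open>h\<close>, keeps the blocks in increasing order and writes each block backwards.
  A common subsequence of \<open>\<pi>\<close> and \<open>\<pi>'\<close> is nondecreasing and splits into \<open>s\<close> pieces,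
  each a strictly increasing subsequence of \<open>\<sigma>\<close> (of \<open>rev \<sigma>\<close> when \<open>\<pi>'\<close> is reversed).
  Such a piece meets every block at most once for \<open>\<sigma>\<close>, and lies inside a single block
  for \<open>\<sigma>\<close> reversed. Since the concatenation is nondecreasing, consecutive pieces share at
  most one block, so the first LCS is at most \<open>(k - 1) div h + s\<close> and the second at most
  \<open>s h\<close>. Choosing \<open>h\<close> with \<open>s (h - 1)\<^sup>2 \<le> k < s h\<^sup>2\<close> makes both at most \<open>\<surd>(k s) + s\<close>.
\<close>

lemma set_mono_subseq: "subseq xs ys \<Longrightarrow> set xs \<subseteq> set ys"
  by (auto elim: list_emb_set)

lemma subseq_sorted_wrt: "subseq xs ys \<Longrightarrow> sorted_wrt P ys \<Longrightarrow> sorted_wrt P xs"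
proof (induction rule: list_emb.induct)
  case (list_emb_Cons2 x y xs ys)
  then show ?case using set_mono_subseq by fastforce
qed auto

lemma subseq_distinct: "subseq xs ys \<Longrightarrow> distinct ys \<Longrightarrow> distinct xs"
  by (auto simp: subseq_conv_nths)

lemma subseq_rev: "subseq xs ys \<Longrightarrow> subseq (rev xs) (rev ys)"
  by (induction rule: list_emb.induct) (auto simp: subseq_rev_drop_many list_emb_append_mono)

lemma rev_concat_replicate: "rev (concat (replicate s w)) = concat (replicate s (rev w))"
  by (simp add: rev_concat)

lemma subseq_concat_replicateE:
  assumes "subseq u (concat (replicate s w))"
  obtains us where "length us = s" "u = concat us" "\<forall>v\<in>set us. subseq v w"
  using assms
proof (induction s arbitrary: u thesis)
  case (Suc s)
  from Suc.prems(2) obtain u1 u2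
    where "u = u1 @ u2" "subseq u1 w" "subseq u2 (concat (replicate s w))"
    by (auto elim: subseq_appendE)
  with Suc.IH[of u2] show ?case
    by (metis Suc.prems(1) concat.simps(2) length_Cons list.set_intros set_ConsD)
qed simp

lemma sorted_subseq_concat_replicateE:
  assumes "subseq u (concat (replicate s w))" and "sorted u" and "distinct w"
  obtains us where "length us = s" "u = concat us" "\<forall>v\<in>set us. subseq v w \<and> sorted_wrt (<) v"
proof -
  obtain us where us: "length us = s" "u = concat us" "\<forall>v\<in>set us. subseq v w"
    using assms(1) by (rule subseq_concat_replicateE)
  have "sorted_wrt (<) v" if v_in: "v \<in> set us" for v
  proof -
    obtain a b where "us = a @ v # b" using split_list[OF v_in] by blast
    then have "sorted v" using assms(2) us(2) by (simp add: sorted_append)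
    moreover have "distinct v" using subseq_distinct us(3) v_in assms(3) by blast
    ultimately show ?thesis by (simp add: strict_sorted_iff)
  qed
  with us that show ?thesis by blast
qed

text \<open>
  A nondecreasing word cut into strictly increasing pieces repeats a value only across a
  cut, which yields the \<open>+ length vs\<close>.
\<close>
lemma length_concat_strictly_sorted_pieces:
  fixes vs :: "nat list list"
  assumes "\<forall>v\<in>set vs. sorted_wrt (<) v" and "sorted (concat vs)"
    and "set (concat vs) \<subseteq> {b..c}" and "b \<le> c"
  shows "length (concat vs) + b \<le> c + length vs"
  using assms
proof (induction vs arbitrary: b)
  case (Cons v vs)
  show ?case
  proof (cases "v = []")
    case True
    with Cons.IH[of b] Cons.prems show ?thesis by simp
  next
    case False
    define m where "m = Max (set v)"
    have m_in: "m \<in> set v" using False by (simp add: m_def)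
    have v_le_m: "\<forall>x\<in>set v. x \<le> m" by (simp add: m_def)
    have m_range: "b \<le> m" "m \<le> c" using m_in Cons.prems(3) by auto
    have "length v = card (set v)"
      using Cons.prems(1) by (simp add: strict_sorted_iff distinct_card)
    also have "\<dots> \<le> card {b..m}"
      using v_le_m Cons.prems(3) by (intro card_mono) auto
    finally have "length v + b \<le> m + 1" using m_range by simp
    moreover have "length (concat vs) + m \<le> c + length vs"
    proof (rule Cons.IH)
      show "set (concat vs) \<subseteq> {m..c}"
        using Cons.prems(2,3) m_in by (fastforce simp: sorted_append)
    qed (use Cons.prems m_range in \<open>auto simp: sorted_append\<close>)
    ultimately show ?thesis by simp
  qed
qed simp

lemma LCS_le:
  assumes "\<And>u. subseq u w \<Longrightarrow> subseq u w' \<Longrightarrow> length u \<le> B"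
  shows "LCS w w' \<le> B"
proof -
  have "finite {length u | u. subseq u w \<and> subseq u w'}"
    by (rule finite_subset[of _ "{0..length w}"]) (auto dest: list_emb_length)
  moreover have "{length u | u. subseq u w \<and> subseq u w'} \<noteq> {}" by auto
  ultimately show ?thesis unfolding LCS_def using assms by auto
qed

lemma multiperm_sort: "multiperm k sv (sort w) \<longleftrightarrow> multiperm k sv w"
  by (simp add: multiperm_def flip: count_mset)

lemma multiperm_concat_replicate:
  assumes "distinct w" and "set w = {1..k}"
  shows "multiperm k (\<lambda>_. s) (concat (replicate s w))"
proof -
  have "count_list (concat (replicate s w)) l = s * count_list w l" for l
    by (induction s) auto
  moreover have "count_list w l = 1" if "l \<in> {1..k}" for l
    using assms that by (simp add: distinct_count_atmost_1 flip: count_mset)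
  ultimately show ?thesis using assms(2) by (simp add: multiperm_def)
qed

definition block :: "nat \<Rightarrow> nat \<Rightarrow> nat" where
  "block h x = (x - 1) div h"

definition block_key :: "nat \<Rightarrow> nat \<Rightarrow> nat \<times> int" where
  "block_key h x = (block h x, - int x)"

text \<open>Sorting by \<open>block_key h\<close> lists the blocks in increasing order, each one backwards.\<close>
definition block_perm :: "nat \<Rightarrow> nat \<Rightarrow> nat list" where
  "block_perm h k = sort_key (block_key h) [1..<k+1]"

lemma block_mono: "x \<le> y \<Longrightarrow> block h x \<le> block h y"
  unfolding block_def by (simp add: div_le_mono)

lemma block_eq_iff:
  assumes "0 < h" and "1 \<le> x"
  shows "block h x = g \<longleftrightarrow> x \<in> {g * h + 1 .. g * h + h}"
proof -
  have "block h x = g \<longleftrightarrow> g * h \<le> x - 1 \<and> x - 1 < g * h + h"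
    using assms(1) unfolding block_def
    by (auto intro: div_nat_eqI dest: sym simp: dividend_less_times_div algebra_simps)
  also have "\<dots> \<longleftrightarrow> x \<in> {g * h + 1 .. g * h + h}"
    using assms(2) unfolding atLeastAtMost_iff by linarith
  finally show ?thesis .
qed

lemma set_block_perm: "set (block_perm h k) = {1..k}"
  by (auto simp: block_perm_def)

lemma distinct_block_perm: "distinct (block_perm h k)"
  by (simp add: block_perm_def)

lemma block_key_strictly_sorted: "sorted_wrt (<) (map (block_key h) (block_perm h k))"
proof -
  have "distinct (map (block_key h) (block_perm h k))"
    using distinct_block_perm by (auto simp: distinct_map inj_on_def block_key_def)
  then show ?thesis by (simp add: strict_sorted_iff block_perm_def)
qed

lemma increasing_subseq_block_perm:
  assumes "subseq v (block_perm h k)" and "sorted_wrt (<) v"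
  shows "sorted_wrt (<) (map (block h) v)"
proof -
  have "sorted_wrt (\<lambda>x y. block_key h x < block_key h y) v"
    using subseq_sorted_wrt[OF subseq_map[OF assms(1)] block_key_strictly_sorted]
    by (simp add: sorted_wrt_map)
  with assms(2) have "sorted_wrt (\<lambda>x y. x < y \<and> block_key h x < block_key h y) v"
    by (induction v) auto
  then show ?thesis
    unfolding sorted_wrt_map
    by (rule sorted_wrt_mono_rel[rotated]) (auto simp: block_key_def)
qed

lemma increasing_subseq_rev_block_perm:
  assumes "0 < h" and "subseq v (rev (block_perm h k))" and "sorted_wrt (<) v"
  shows "length v \<le> h"
proof (cases v)
  case (Cons x v')
  have "subseq (rev v) (block_perm h k)" using subseq_rev[OF assms(2)] by simp
  then have "sorted_wrt (<) (map (block_key h) (rev v))"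
    using subseq_sorted_wrt[OF subseq_map block_key_strictly_sorted] by blast
  then have "sorted_wrt (\<lambda>x y. block_key h y < block_key h x) v"
    by (simp add: sorted_wrt_map sorted_wrt_rev flip: rev_map)
  with assms(3) have "sorted_wrt (\<lambda>x y. x < y \<and> block_key h y < block_key h x) v"
    by (induction v) auto
  then have "sorted_wrt (\<lambda>x y. block h x = block h y) v"
  proof (rule sorted_wrt_mono_rel[rotated])
    fix x y assume "x < y \<and> block_key h y < block_key h x"
    with block_mono[of x y h] show "block h x = block h y" by (auto simp: block_key_def)
  qed
  then have same_block: "\<forall>y\<in>set v. block h y = block h x" using Cons by auto
  have v_range: "set v \<subseteq> {1..k}"
    using set_mono_subseq[OF assms(2)] set_block_perm by simp
  have "set v \<subseteq> {block h x * h + 1 .. block h x * h + h}"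
  proof
    fix y assume "y \<in> set v"
    then have "block h y = block h x" and "1 \<le> y" using same_block v_range by auto
    then show "y \<in> {block h x * h + 1 .. block h x * h + h}"
      using block_eq_iff[OF assms(1)] by blast
  qed
  then have "card (set v) \<le> card {block h x * h + 1 .. block h x * h + h}"
    by (intro card_mono) auto
  then show ?thesis using assms(3) by (simp add: strict_sorted_iff distinct_card)
qed simp

lemma LCS_sorted_block_perm_replicate:
  assumes "sorted w"
  shows "LCS w (concat (replicate s (block_perm h k))) \<le> (k - 1) div h + s"
proof (rule LCS_le)
  fix u assume u: "subseq u w" "subseq u (concat (replicate s (block_perm h k)))"
  obtain us where us: "length us = s" "u = concat us"
    and pieces: "\<forall>v\<in>set us. subseq v (block_perm h k) \<and> sorted_wrt (<) v"
    using u(2) subseq_sorted_wrt[OF u(1) assms] distinct_block_perm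
    by (rule sorted_subseq_concat_replicateE)
  let ?bs = "map (map (block h)) us"
  have "length (concat ?bs) + 0 \<le> block h k + length ?bs"
  proof (rule length_concat_strictly_sorted_pieces)
    show "\<forall>v\<in>set ?bs. sorted_wrt (<) v"
      using pieces increasing_subseq_block_perm by auto
    have "sorted u" using subseq_sorted_wrt[OF u(1) assms] .
    then show "sorted (concat ?bs)"
      unfolding us(2) map_concat[symmetric] sorted_wrt_map
      by (rule sorted_wrt_mono_rel[rotated]) (simp add: block_mono)
    have "set u \<subseteq> {1..k}"
      using set_mono_subseq[OF u(2)] set_block_perm by (auto split: if_splits)
    then show "set (concat ?bs) \<subseteq> {0..block h k}"
      by (auto simp: us(2) block_mono)
  qed simp
  then show "length u \<le> (k - 1) div h + s"
    by (simp add: us block_def flip: map_concat)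
qed

lemma LCS_sorted_rev_block_perm_replicate:
  assumes "0 < h" and "sorted w"
  shows "LCS w (rev (concat (replicate s (block_perm h k)))) \<le> s * h"
proof (rule LCS_le)
  fix u assume u: "subseq u w" "subseq u (rev (concat (replicate s (block_perm h k))))"
  have "subseq u (concat (replicate s (rev (block_perm h k))))"
    using u(2) by (simp add: rev_concat_replicate)
  moreover have "distinct (rev (block_perm h k))" by (simp add: distinct_block_perm)
  ultimately obtain us where us: "length us = s" "u = concat us"
    and pieces: "\<forall>v\<in>set us. subseq v (rev (block_perm h k)) \<and> sorted_wrt (<) v"
    using subseq_sorted_wrt[OF u(1) assms(2)] by (elim sorted_subseq_concat_replicateE) blast
  have "length u = sum_list (map length us)" by (simp add: us(2) length_concat)
  also have "\<dots> \<le> sum_list (map (\<lambda>_. h) us)"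
    using pieces increasing_subseq_rev_block_perm[OF assms(1)] by (intro sum_list_mono) blast
  finally show "length u \<le> s * h" by (simp add: us(1) sum_list_triv)
qed

lemma exists_block_size:
  fixes s k :: nat
  assumes "0 < s"
  obtains h where "1 \<le> h" "s * (h - 1)\<^sup>2 \<le> k" "k < s * h\<^sup>2"
proof -
  define h where "h = (LEAST h. k < s * h\<^sup>2)"
  have "k < (k + 1)\<^sup>2" by (simp add: power2_eq_square)
  also have "\<dots> \<le> s * (k + 1)\<^sup>2" using assms by simp
  finally have k_lt: "k < s * h\<^sup>2" unfolding h_def by (rule LeastI)
  then have "1 \<le> h" by (cases h) auto
  moreover have "\<not> k < s * (h - 1)\<^sup>2"
    using \<open>1 \<le> h\<close> unfolding h_def by (intro not_less_Least) simp
  ultimately show ?thesis using that k_lt by simp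
qed

lemma real_le_sqrt_of_square_le: "m * m \<le> n \<Longrightarrow> real m \<le> sqrt (real n)"
  by (rule real_le_rsqrt) (simp add: power2_eq_square flip: of_nat_mult)

lemma div_block_size_le_sqrt:
  assumes "0 < k" and "k < s * h\<^sup>2"
  shows "real ((k - 1) div h) \<le> sqrt (real (k * s))"
proof (rule real_le_sqrt_of_square_le)
  let ?q = "(k - 1) div h"
  have "?q * h < k" using assms(1) div_times_less_eq_dividend[of "k - 1" h] by linarith
  then have "(?q * h) * (?q * h) \<le> k * (s * h\<^sup>2)"
    using assms(2) by (intro mult_le_mono[of "?q * h" k "?q * h" "s * h\<^sup>2"]) linarith+
  then have "(?q * ?q) * h\<^sup>2 \<le> (k * s) * h\<^sup>2" by (simp add: power2_eq_square ac_simps)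
  moreover have "0 < h" using assms(2) by (cases h) auto
  ultimately show "?q * ?q \<le> k * s" by simp
qed

lemma block_size_le_sqrt:
  assumes "s * (h - 1)\<^sup>2 \<le> k"
  shows "real (s * (h - 1)) \<le> sqrt (real (k * s))"
proof (rule real_le_sqrt_of_square_le)
  have "s * (h - 1) * (s * (h - 1)) = s * (s * (h - 1)\<^sup>2)" by (simp add: power2_eq_square)
  also have "\<dots> \<le> k * s" using assms by simp
  finally show "s * (h - 1) * (s * (h - 1)) \<le> k * s" .
qed

theorem theorem13:
  fixes s k :: nat
  assumes "s > 0" and "k > 0"
  shows "\<exists>\<pi> \<pi>'. multiperm k (\<lambda>_. s) \<pi> \<and> multiperm k (\<lambda>_. s) \<pi>' \<and>
           real (max (LCS \<pi> \<pi>') (LCS \<pi> (rev \<pi>'))) \<le> sqrt (real (k * s)) + real s"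
proof -
  obtain h where h: "1 \<le> h" "s * (h - 1)\<^sup>2 \<le> k" "k < s * h\<^sup>2"
    using exists_block_size[OF assms(1)] .
  define \<pi> where "\<pi> = sort (concat (replicate s [1..<k+1]))"
  define \<pi>' where "\<pi>' = concat (replicate s (block_perm h k))"
  have "multiperm k (\<lambda>_. s) \<pi>"
    unfolding \<pi>_def multiperm_sort by (rule multiperm_concat_replicate) auto
  moreover have "multiperm k (\<lambda>_. s) \<pi>'"
    unfolding \<pi>'_def using distinct_block_perm set_block_perm by (rule multiperm_concat_replicate)
  moreover have "real (max (LCS \<pi> \<pi>') (LCS \<pi> (rev \<pi>'))) \<le> sqrt (real (k * s)) + real s"
  proof -
    have \<pi>_sorted: "sorted \<pi>" by (simp add: \<pi>_def)
    have "0 < h" and "s * h = s * (h - 1) + s" using h(1) by (cases h; simp)+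
    then have "LCS \<pi> \<pi>' \<le> (k - 1) div h + s" "LCS \<pi> (rev \<pi>') \<le> s * (h - 1) + s"
      using LCS_sorted_block_perm_replicate[OF \<pi>_sorted, of s h k]
        LCS_sorted_rev_block_perm_replicate[OF \<open>0 < h\<close> \<pi>_sorted, of s k]
      unfolding \<pi>'_def by simp_all
    then have "real (LCS \<pi> \<pi>') \<le> real ((k - 1) div h) + real s"
      and "real (LCS \<pi> (rev \<pi>')) \<le> real (s * (h - 1)) + real s"
      by (metis of_nat_add of_nat_mono)+
    with div_block_size_le_sqrt[OF assms(2) h(3)] block_size_le_sqrt[OF h(2)]
    show ?thesis by (simp only: of_nat_max max.bounded_iff) linarith
  qed
  ultimately show ?thesis by blast
qed

end
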